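(* Let $(R,\mathfrak m)$ be a one-dimensional Cohen–Macaulay local ring, let $I$ be an $\mathfrak m$-primary ideal of $R$, and let $x\in\mathfrak m$ be a parameter of $R$. (i) If $R/x^nI$ is a Gorenstein ring for some $n\ge 1$, then $R/I$ is a Gorenstein ring and $(x^nI:_R\mathfrak m)=x^n(I:_R\mathfrak m)$. (ii) Assume that $I\subset xR$. If $R/I$ is a Gorenstein ring, then $R/x^nI$ is a Gorenstein ring for all $n\ge 1$. *)

theory Defs
  imports Main "HOL-Library.Extended_Nat"
begin

text \<open>Commutative ring theory for the ring given by the whole type 'a (class comm_ring_1).
  Ideals are represented as subsets of the type.\<close>

definition is_ideal :: "'a::comm_ring_1 set \<Rightarrow> bool" where
  "is_ideal I \<longleftrightarrow> 0 \<in> I \<and> (\<forall>a\<in>I. \<forall>b\<in>I. a + b \<in> I) \<and> (\<forall>a\<in>I. \<forall>r. r * a \<in> I)"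

definition ideal_gen :: "'a::comm_ring_1 set \<Rightarrow> 'a set" where
  "ideal_gen F = \<Inter>{J. is_ideal J \<and> F \<subseteq> J}"

definition prime_ideal :: "'a::comm_ring_1 set \<Rightarrow> bool" where
  "prime_ideal P \<longleftrightarrow> is_ideal P \<and> P \<noteq> UNIV \<and> (\<forall>a b. a * b \<in> P \<longrightarrow> a \<in> P \<or> b \<in> P)"

definition maximal_ideal :: "'a::comm_ring_1 set \<Rightarrow> bool" where
  "maximal_ideal M \<longleftrightarrow> is_ideal M \<and> M \<noteq> UNIV \<and>
     (\<forall>J. is_ideal J \<and> M \<subseteq> J \<longrightarrow> J = M \<or> J = UNIV)"

definition noetherian_ring :: "'a::comm_ring_1 itself \<Rightarrow> bool" where
  "noetherian_ring _ \<longleftrightarrow> (\<forall>I::'a set. is_ideal I \<longrightarrow> (\<exists>F. finite F \<and> I = ideal_gen F))"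

definition local_ring_max :: "'a::comm_ring_1 set \<Rightarrow> bool" where
  "local_ring_max m \<longleftrightarrow> maximal_ideal m \<and> (\<forall>M. maximal_ideal M \<longrightarrow> M = m)"

text \<open>Krull dimension of R/J: supremum of lengths of chains of primes containing J.\<close>
definition ideal_dim :: "'a::comm_ring_1 set \<Rightarrow> enat" where
  "ideal_dim J = Sup {enat n | n. \<exists>P::nat \<Rightarrow> 'a set.
      (\<forall>i\<le>n. prime_ideal (P i) \<and> J \<subseteq> P i) \<and> (\<forall>i<n. P i \<subset> P (Suc i))}"

definition principal :: "'a::comm_ring_1 \<Rightarrow> 'a set" where
  "principal x = {x * r | r. True}"

definition scale_ideal :: "'a::comm_ring_1 \<Rightarrow> 'a set \<Rightarrow> 'a set" where
  "scale_ideal a J = {a * j | j. j \<in> J}"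

definition colon :: "'a::comm_ring_1 set \<Rightarrow> 'a set \<Rightarrow> 'a set" where
  "colon I m = {r. \<forall>a\<in>m. r * a \<in> I}"

definition radical :: "'a::comm_ring_1 set \<Rightarrow> 'a set" where
  "radical I = {a. \<exists>n. a ^ n \<in> I}"

definition m_primary :: "'a::comm_ring_1 set \<Rightarrow> 'a set \<Rightarrow> bool" where
  "m_primary m I \<longleftrightarrow> is_ideal I \<and> I \<noteq> UNIV \<and> radical I = m"

definition regular_seq :: "'a::comm_ring_1 set \<Rightarrow> 'a list \<Rightarrow> bool" where
  "regular_seq m xs \<longleftrightarrow> set xs \<subseteq> m \<and> ideal_gen (set xs) \<noteq> UNIV \<and>
     (\<forall>i<length xs. \<forall>y. xs ! i * y \<in> ideal_gen (set (take i xs)) \<longrightarrow> y \<in> ideal_gen (set (take i xs)))"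

definition depth :: "'a::comm_ring_1 set \<Rightarrow> enat" where
  "depth m = Sup {enat (length xs) | xs. regular_seq m xs}"

definition cohen_macaulay :: "'a::comm_ring_1 set \<Rightarrow> bool" where
  "cohen_macaulay m \<longleftrightarrow> depth m = ideal_dim ({0} :: 'a set)"

definition parameter :: "'a::comm_ring_1 set \<Rightarrow> 'a \<Rightarrow> bool" where
  "parameter m x \<longleftrightarrow> x \<in> m \<and> ideal_dim (principal x) + 1 = ideal_dim ({0} :: 'a set)"

text \<open>R/J (J an m-primary ideal, so R/J is an Artinian local ring) is Gorenstein:
  its socle (J : m)/J is a simple module, i.e. a one-dimensional R/m-vector space.\<close>
definition gorenstein_quot :: "'a::comm_ring_1 set \<Rightarrow> 'a set \<Rightarrow> bool" where
  "gorenstein_quot m J \<longleftrightarrow> J \<subset> colon J m \<and>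
     (\<forall>K. is_ideal K \<and> J \<subseteq> K \<and> K \<subseteq> colon J m \<longrightarrow> K = J \<or> K = colon J m)"

end

theory Submission
  imports Defs
begin

text \<open>
  A parameter x of a one-dimensional Cohen--Macaulay local ring is a non-zero-divisor: some power
  of a regular element of m lies in xR, since otherwise a prime containing xR and avoiding that
  element would sit strictly below m. For a non-zero-divisor a, the map J \<mapsto> aJ is an order
  embedding of ideals, so whenever (aJ : m) = a(J : m) it identifies the interval of ideals between
  aJ and (aJ : m) with the one between J and (J : m); R/J is Gorenstein exactly when this interval
  has no ideals besides its end points. Such an equality holds in both situations of the theorem:
  in (i) because a(I : m) is an ideal strictly between aI and (aI : m) in a Gorenstein quotient
  (using that the socle of R/I is nonzero), and in (ii) because rx \<in> aI \<subseteq> axR lets one cancel x.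
\<close>

definition nonzerodivisor :: "'a::comm_ring_1 \<Rightarrow> bool" where
  "nonzerodivisor a \<longleftrightarrow> (\<forall>y. a * y = 0 \<longrightarrow> y = 0)"

lemma nonzerodivisor_power:
  assumes "nonzerodivisor a"
  shows "nonzerodivisor (a ^ n)"
  using assms unfolding nonzerodivisor_def
  by (induction n) (simp, metis mult.assoc power_Suc)

lemma nonzerodivisor_mult_cancel:
  "nonzerodivisor a \<Longrightarrow> a * r = a * s \<Longrightarrow> r = s"
  unfolding nonzerodivisor_def by (metis eq_iff_diff_eq_0 right_diff_distrib)

lemma is_ideal_0: "is_ideal I \<Longrightarrow> 0 \<in> I"
  by (simp add: is_ideal_def)

lemma is_ideal_add: "is_ideal I \<Longrightarrow> a \<in> I \<Longrightarrow> b \<in> I \<Longrightarrow> a + b \<in> I"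
  by (simp add: is_ideal_def)

lemma is_ideal_mult_left: "is_ideal I \<Longrightarrow> a \<in> I \<Longrightarrow> r * a \<in> I"
  by (simp add: is_ideal_def)

lemma is_ideal_mult_right: "is_ideal I \<Longrightarrow> a \<in> I \<Longrightarrow> a * r \<in> I"
  by (metis is_ideal_mult_left mult.commute)

lemma is_ideal_one_iff: "is_ideal I \<Longrightarrow> 1 \<in> I \<longleftrightarrow> I = UNIV"
  by (metis UNIV_I is_ideal_mult_left mult.right_neutral subsetI subset_antisym)

lemma is_ideal_mult_preimage:
  assumes "is_ideal K"
  shows "is_ideal {s. a * s \<in> K}"
  using assms unfolding is_ideal_def by (simp add: distrib_left mult.left_commute)

lemma is_ideal_add_principal:
  assumes "is_ideal P"
  shows "is_ideal {p + r * a | p r. p \<in> P}"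
  unfolding is_ideal_def
proof (intro conjI ballI allI)
  show "0 \<in> {p + r * a | p r. p \<in> P}"
    using is_ideal_0[OF assms] by (intro CollectI exI[of _ 0] exI[of _ 0]) simp
next
  fix u v assume "u \<in> {p + r * a | p r. p \<in> P}" "v \<in> {p + r * a | p r. p \<in> P}"
  then obtain p r q s where "u = p + r * a" "v = q + s * a" "p \<in> P" "q \<in> P" by blast
  then show "u + v \<in> {p + r * a | p r. p \<in> P}"
    by (intro CollectI exI[of _ "p + q"] exI[of _ "r + s"])
      (auto simp: algebra_simps is_ideal_add[OF assms])
next
  fix u t assume "u \<in> {p + r * a | p r. p \<in> P}"
  then obtain p r where "u = p + r * a" "p \<in> P" by blast
  then have "t * u = t * p + (t * r) * a" "t * p \<in> P"
    using is_ideal_mult_left[OF assms] by (auto simp: algebra_simps)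
  then show "t * u \<in> {p + r * a | p r. p \<in> P}" by blast
qed

lemma is_ideal_scale_ideal:
  assumes "is_ideal J"
  shows "is_ideal (scale_ideal a J)"
  unfolding is_ideal_def scale_ideal_def
proof (intro conjI ballI allI)
  show "0 \<in> {a * j |j. j \<in> J}"
    using is_ideal_0[OF assms] by force
next
  fix u v assume "u \<in> {a * j |j. j \<in> J}" "v \<in> {a * j |j. j \<in> J}"
  then obtain i j where "u = a * i" "v = a * j" "i \<in> J" "j \<in> J" by blast
  then show "u + v \<in> {a * j |j. j \<in> J}"
    using is_ideal_add[OF assms] by (intro CollectI exI[of _ "i + j"]) (simp add: distrib_left)
next
  fix u t assume "u \<in> {a * j |j. j \<in> J}"
  then obtain i where "u = a * i" "i \<in> J" by blast
  then show "t * u \<in> {a * j |j. j \<in> J}"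
    using is_ideal_mult_left[OF assms]
    by (intro CollectI exI[of _ "t * i"]) (simp add: mult.left_commute)
qed

lemma is_ideal_UNIV: "is_ideal UNIV"
  by (simp add: is_ideal_def)

lemma principal_eq_scale_ideal_UNIV: "principal x = scale_ideal x UNIV"
  by (simp add: principal_def scale_ideal_def)

lemma is_ideal_principal: "is_ideal (principal x)"
  by (simp add: principal_eq_scale_ideal_UNIV is_ideal_scale_ideal is_ideal_UNIV)

lemma is_ideal_colon:
  assumes "is_ideal I"
  shows "is_ideal (colon I m)"
  using assms unfolding is_ideal_def colon_def by (simp add: distrib_right mult.assoc)

lemma ideal_gen_least: "is_ideal J \<Longrightarrow> F \<subseteq> J \<Longrightarrow> ideal_gen F \<subseteq> J"
  unfolding ideal_gen_def by blast

lemma ideal_gen_upper: "F \<subseteq> ideal_gen F"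
  unfolding ideal_gen_def by blast

lemma ideal_gen_empty: "ideal_gen ({} :: 'a::comm_ring_1 set) = {0}"
proof -
  have "is_ideal ({0} :: 'a set)" by (simp add: is_ideal_def)
  then show ?thesis
    unfolding ideal_gen_def using is_ideal_0 by blast
qed

subsection \<open>Prime and maximal ideals\<close>

lemma exists_maximal_ideal_avoiding_powers:
  fixes z :: "'a::comm_ring_1"
  assumes "is_ideal J" "\<forall>k. z ^ k \<notin> J"
  shows "\<exists>P. is_ideal P \<and> J \<subseteq> P \<and> (\<forall>k. z ^ k \<notin> P) \<and>
    (\<forall>Q. is_ideal Q \<and> P \<subseteq> Q \<and> (\<forall>k. z ^ k \<notin> Q) \<longrightarrow> Q = P)"
proof -
  let ?A = "{Q. is_ideal Q \<and> J \<subseteq> Q \<and> (\<forall>k. z ^ k \<notin> Q)}"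
  have "\<exists>P\<in>?A. \<forall>Q\<in>?A. P \<subseteq> Q \<longrightarrow> Q = P"
  proof (rule subset_Zorn_nonempty)
    show "?A \<noteq> {}" using assms by blast
  next
    fix C assume C: "C \<noteq> {}" "subset.chain ?A C"
    then have CA: "C \<subseteq> ?A" and chain: "\<forall>X\<in>C. \<forall>Y\<in>C. X \<subseteq> Y \<or> Y \<subseteq> X"
      by (auto simp: subset.chain_def)
    have "is_ideal (\<Union>C)"
      unfolding is_ideal_def
    proof (intro conjI ballI allI)
      show "0 \<in> \<Union>C" using C(1) CA is_ideal_0 by blast
    next
      fix a b assume "a \<in> \<Union>C" "b \<in> \<Union>C"
      then obtain X Y where "X \<in> C" "Y \<in> C" "a \<in> X" "b \<in> Y" by blast
      with chain obtain Z where "Z \<in> C" "a \<in> Z" "b \<in> Z" by blast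
      with CA show "a + b \<in> \<Union>C"
        using is_ideal_add[of Z a b] by blast
    next
      fix a r assume "a \<in> \<Union>C"
      with CA show "r * a \<in> \<Union>C" using is_ideal_mult_left by blast
    qed
    then show "\<Union>C \<in> ?A" using C(1) CA by blast
  qed
  then obtain P where P: "P \<in> ?A" and max: "\<forall>Q\<in>?A. P \<subseteq> Q \<longrightarrow> Q = P" ..
  have "Q = P" if "is_ideal Q" "P \<subseteq> Q" "\<forall>k. z ^ k \<notin> Q" for Q
    using max that order_trans[of J P Q] P by simp
  with P show ?thesis by blast
qed

lemma maximal_avoiding_powers_imp_prime:
  fixes z :: "'a::comm_ring_1"
  assumes P: "is_ideal P" "\<forall>k. z ^ k \<notin> P"
    and max: "\<forall>Q. is_ideal Q \<and> P \<subseteq> Q \<and> (\<forall>k. z ^ k \<notin> Q) \<longrightarrow> Q = P"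
  shows "prime_ideal P"
  unfolding prime_ideal_def
proof (intro conjI allI impI)
  show "is_ideal P" by fact
  show "P \<noteq> UNIV" using P(2) by blast
next
  fix a b assume ab: "a * b \<in> P"
  have power_in_extension: "\<exists>k p r. z ^ k = p + r * c \<and> p \<in> P" if "c \<notin> P" for c
  proof (rule ccontr)
    let ?Pc = "{p + r * c | p r. p \<in> P}"
    assume "\<not> ?thesis"
    moreover have "P \<subseteq> ?Pc" by (force intro: exI[of _ 0])
    ultimately have "?Pc = P"
      using max is_ideal_add_principal[OF P(1)] by blast
    moreover have "c \<in> ?Pc"
      using is_ideal_0[OF P(1)] by (force intro: exI[of _ 1])
    ultimately show False using that by simp
  qed
  show "a \<in> P \<or> b \<in> P"
  proof (rule ccontr)
    assume "\<not> (a \<in> P \<or> b \<in> P)"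
    then obtain i p r j q s where
      i: "z ^ i = p + r * a" "p \<in> P" and j: "z ^ j = q + s * b" "q \<in> P"
      using power_in_extension by meson
    have "z ^ (i + j) = p * q + p * (s * b) + q * (r * a) + (r * s) * (a * b)"
      by (simp add: power_add i j algebra_simps)
    also have "\<dots> \<in> P"
      using i(2) j(2) ab is_ideal_mult_left[OF P(1)] is_ideal_mult_right[OF P(1)]
        is_ideal_add[OF P(1)] by simp
    finally show False using P(2) by blast
  qed
qed

lemma exists_prime_avoiding_powers:
  fixes z :: "'a::comm_ring_1"
  assumes "is_ideal J" "\<forall>k. z ^ k \<notin> J"
  shows "\<exists>P. prime_ideal P \<and> J \<subseteq> P \<and> (\<forall>k. z ^ k \<notin> P)"
  using exists_maximal_ideal_avoiding_powers[OF assms] maximal_avoiding_powers_imp_prime by blast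

text \<open>The ideals avoiding all powers of 1 are exactly the proper ideals.\<close>

lemma maximal_ideal_imp_prime:
  assumes "maximal_ideal M"
  shows "prime_ideal M"
  using assms is_ideal_one_iff
  by (intro maximal_avoiding_powers_imp_prime[where z = 1]) (auto simp: maximal_ideal_def)

lemma proper_ideal_subset_maximal:
  fixes J :: "'a::comm_ring_1 set"
  assumes "is_ideal J" "J \<noteq> UNIV"
  shows "\<exists>M. maximal_ideal M \<and> J \<subseteq> M"
proof -
  obtain M where M: "is_ideal M" "J \<subseteq> M" "1 \<notin> M"
    and max: "\<forall>Q. is_ideal Q \<and> M \<subseteq> Q \<and> 1 \<notin> Q \<longrightarrow> Q = M"
    using exists_maximal_ideal_avoiding_powers[OF assms(1), of 1] assms is_ideal_one_iff
    by auto
  then have "maximal_ideal M"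
    unfolding maximal_ideal_def using is_ideal_one_iff by blast
  with M(2) show ?thesis by blast
qed

lemma local_ring_proper_ideal_subset:
  assumes "local_ring_max m" "is_ideal J" "J \<noteq> UNIV"
  shows "J \<subseteq> m"
  using proper_ideal_subset_maximal[OF assms(2,3)] assms(1) by (auto simp: local_ring_max_def)

subsection \<open>Dimension and depth\<close>

lemma ideal_dim_ge_1:
  assumes "prime_ideal P" "prime_ideal Q" "J \<subseteq> P" "P \<subset> Q"
  shows "1 \<le> ideal_dim J"
proof -
  define C where "C = (\<lambda>i::nat. if i = 0 then P else Q)"
  have "(\<forall>i\<le>1. prime_ideal (C i) \<and> J \<subseteq> C i) \<and> (\<forall>i<1. C i \<subset> C (Suc i))"
    using assms unfolding C_def by auto
  then have "enat 1 \<in> {enat n | n. \<exists>P::nat \<Rightarrow> 'a set.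
      (\<forall>i\<le>n. prime_ideal (P i) \<and> J \<subseteq> P i) \<and> (\<forall>i<n. P i \<subset> P (Suc i))}"
    by blast
  then show ?thesis
    unfolding ideal_dim_def one_enat_def by (rule Sup_upper)
qed

lemma local_ring_ideal_dim_0_power_mem:
  assumes loc: "local_ring_max m" and J: "is_ideal J" and dim0: "ideal_dim J = 0"
    and "z \<in> m"
  shows "\<exists>k. z ^ k \<in> J"
proof (rule ccontr)
  assume "\<not> ?thesis"
  then obtain P where P: "prime_ideal P" "J \<subseteq> P" "\<forall>k. z ^ k \<notin> P"
    using exists_prime_avoiding_powers[OF J] by blast
  have m: "prime_ideal m"
    using loc maximal_ideal_imp_prime by (auto simp: local_ring_max_def)
  have "P \<subset> m"
    using local_ring_proper_ideal_subset[OF loc] P \<open>z \<in> m\<close>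
    by (metis power_one_right prime_ideal_def psubsetI)
  then show False
    using ideal_dim_ge_1[OF P(1) m P(2)] dim0 by simp
qed

lemma parameter_ideal_dim_0:
  fixes x :: "'a::comm_ring_1"
  assumes "parameter m x" "ideal_dim ({0} :: 'a set) = 1"
  shows "ideal_dim (principal x) = 0"
proof -
  have "ideal_dim (principal x) + 1 = 1"
    using assms unfolding parameter_def by simp
  then show ?thesis
    by (cases "ideal_dim (principal x)") (simp_all add: one_enat_def zero_enat_def)
qed

lemma depth_pos_imp_nonzerodivisor:
  assumes "1 \<le> depth m"
  shows "\<exists>z\<in>m. nonzerodivisor z"
proof -
  have "\<exists>xs. regular_seq m xs \<and> xs \<noteq> []"
  proof (rule ccontr)
    assume "\<not> ?thesis"
    then have "\<forall>s\<in>{enat (length xs) | xs. regular_seq m xs}. s \<le> 0"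
      by (auto simp: zero_enat_def)
    then have "depth m \<le> 0"
      unfolding depth_def by (meson Sup_least)
    with assms show False by simp
  qed
  then obtain xs where "set xs \<subseteq> m" "0 < length xs"
    and regular: "\<forall>i<length xs. \<forall>y. xs ! i * y \<in> ideal_gen (set (take i xs)) \<longrightarrow>
      y \<in> ideal_gen (set (take i xs))"
    unfolding regular_seq_def by auto
  then have "xs ! 0 \<in> m" "nonzerodivisor (xs ! 0)"
    using regular[rule_format, of 0] by (auto simp: nonzerodivisor_def ideal_gen_empty)
  then show ?thesis by blast
qed

lemma parameter_nonzerodivisor:
  fixes m :: "'a::comm_ring_1 set"
  assumes loc: "local_ring_max m"
    and dim1: "ideal_dim ({0} :: 'a set) = 1"
    and CM: "cohen_macaulay m"
    and par: "parameter m x"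
  shows "nonzerodivisor x"
proof -
  have "1 \<le> depth m"
    using CM dim1 by (simp add: cohen_macaulay_def)
  then obtain z where "z \<in> m" and z: "nonzerodivisor z"
    using depth_pos_imp_nonzerodivisor by blast
  then obtain k where "z ^ k \<in> principal x"
    using local_ring_ideal_dim_0_power_mem[OF loc is_ideal_principal parameter_ideal_dim_0[OF par dim1]]
    by blast
  then obtain s where zk: "z ^ k = x * s"
    unfolding principal_def by blast
  show ?thesis
    unfolding nonzerodivisor_def
  proof (intro allI impI)
    fix y assume "x * y = 0"
    then have "z ^ k * y = 0" by (simp add: zk mult.commute mult.left_commute)
    then show "y = 0" using nonzerodivisor_power[OF z] by (simp add: nonzerodivisor_def)
  qed
qed

subsection \<open>The socle of an m-primary ideal\<close>

lemma colon_superset: "is_ideal I \<Longrightarrow> I \<subseteq> colon I m"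
  unfolding colon_def using is_ideal_mult_right by blast

lemma exists_nonmember_annihilating_finite:
  assumes I: "is_ideal I" "I \<noteq> UNIV" and "finite S" "S \<subseteq> radical I"
  shows "\<exists>r. r \<notin> I \<and> (\<forall>s\<in>S. r * s \<in> I)"
  using assms(3,4)
proof (induction S rule: finite_induct)
  case empty
  then show ?case using I is_ideal_one_iff by blast
next
  case (insert f S)
  then obtain r where r: "r \<notin> I" "\<forall>s\<in>S. r * s \<in> I" by auto
  obtain e where "f ^ e \<in> I" using insert(4) unfolding radical_def by blast
  then have "r * f ^ e \<in> I" using is_ideal_mult_left[OF I(1)] by simp
  then obtain j where j: "r * f ^ j \<notin> I" "r * f ^ Suc j \<in> I"
    using r(1) by (induction e) auto
  have "(r * f ^ j) * s \<in> I" if "s \<in> insert f S" for s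
  proof (cases "s = f")
    case True
    then show ?thesis using j(2) by (metis mult.assoc power_Suc2)
  next
    case False
    then have "f ^ j * (r * s) \<in> I"
      using that r(2) is_ideal_mult_left[OF I(1)] by blast
    then show ?thesis by (simp add: ac_simps)
  qed
  with j(1) show ?case by blast
qed

lemma m_primary_colon_psubset:
  assumes noeth: "noetherian_ring TYPE('a::comm_ring_1)"
    and loc: "local_ring_max m" and prim: "m_primary m (I :: 'a set)"
  shows "I \<subset> colon I m"
proof -
  have I: "is_ideal I" "I \<noteq> UNIV" and rad: "radical I = m"
    using prim by (auto simp: m_primary_def)
  have "is_ideal m"
    using loc by (simp add: local_ring_max_def maximal_ideal_def)
  then obtain F where F: "finite F" "m = ideal_gen F"
    using noeth unfolding noetherian_ring_def by blast
  moreover have "F \<subseteq> radical I"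
    using F(2) ideal_gen_upper rad by blast
  ultimately obtain r where r: "r \<notin> I" "\<forall>s\<in>F. r * s \<in> I"
    using exists_nonmember_annihilating_finite[OF I] by blast
  then have "m \<subseteq> {s. r * s \<in> I}"
    unfolding F(2) by (intro ideal_gen_least is_ideal_mult_preimage[OF I(1)]) blast
  then have "r \<in> colon I m" unfolding colon_def by blast
  with r(1) colon_superset[OF I(1)] show ?thesis by blast
qed

subsection \<open>Multiplying an ideal by a non-zero-divisor\<close>

lemma scale_ideal_mem_iff:
  "nonzerodivisor a \<Longrightarrow> a * r \<in> scale_ideal a J \<longleftrightarrow> r \<in> J"
  unfolding scale_ideal_def using nonzerodivisor_mult_cancel by blast

lemma scale_ideal_subset_iff:
  assumes "nonzerodivisor a"
  shows "scale_ideal a J \<subseteq> scale_ideal a K \<longleftrightarrow> J \<subseteq> K"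
  using scale_ideal_mem_iff[OF assms] unfolding scale_ideal_def by blast

lemma scale_ideal_eq_iff:
  "nonzerodivisor a \<Longrightarrow> scale_ideal a J = scale_ideal a K \<longleftrightarrow> J = K"
  using scale_ideal_subset_iff by blast

lemma scale_ideal_colon_subset: "scale_ideal a (colon I m) \<subseteq> colon (scale_ideal a I) m"
  unfolding scale_ideal_def colon_def by (auto simp: mult.assoc)

lemma subset_scale_ideal_eq:
  assumes "K \<subseteq> scale_ideal a L"
  shows "K = scale_ideal a {s. a * s \<in> K}"
  using assms unfolding scale_ideal_def by blast

lemma ideal_between_scale_ideals_iff:
  assumes a: "nonzerodivisor a"
  shows "is_ideal K \<and> scale_ideal a J \<subseteq> K \<and> K \<subseteq> scale_ideal a L \<longleftrightarrow>
    (\<exists>K'. K = scale_ideal a K' \<and> is_ideal K' \<and> J \<subseteq> K' \<and> K' \<subseteq> L)"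
proof
  assume K: "is_ideal K \<and> scale_ideal a J \<subseteq> K \<and> K \<subseteq> scale_ideal a L"
  show "\<exists>K'. K = scale_ideal a K' \<and> is_ideal K' \<and> J \<subseteq> K' \<and> K' \<subseteq> L"
  proof (intro exI conjI)
    show "K = scale_ideal a {s. a * s \<in> K}"
      using K subset_scale_ideal_eq by blast
    show "is_ideal {s. a * s \<in> K}"
      using K is_ideal_mult_preimage by blast
    show "J \<subseteq> {s. a * s \<in> K}"
      using K unfolding scale_ideal_def by blast
    show "{s. a * s \<in> K} \<subseteq> L"
      using K scale_ideal_mem_iff[OF a] by blast
  qed
next
  assume "\<exists>K'. K = scale_ideal a K' \<and> is_ideal K' \<and> J \<subseteq> K' \<and> K' \<subseteq> L"
  then show "is_ideal K \<and> scale_ideal a J \<subseteq> K \<and> K \<subseteq> scale_ideal a L"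
    using is_ideal_scale_ideal scale_ideal_subset_iff[OF a] by blast
qed

lemma gorenstein_quot_scale_ideal_iff:
  assumes a: "nonzerodivisor a"
    and eq: "colon (scale_ideal a J) m = scale_ideal a (colon J m)"
  shows "gorenstein_quot m (scale_ideal a J) \<longleftrightarrow> gorenstein_quot m J"
proof -
  note interval = ideal_between_scale_ideals_iff[OF a, where J = J and L = "colon J m"]
  have "scale_ideal a J \<subset> scale_ideal a (colon J m) \<longleftrightarrow> J \<subset> colon J m"
    by (simp add: psubset_eq scale_ideal_subset_iff[OF a] scale_ideal_eq_iff[OF a])
  moreover have "(\<forall>K. is_ideal K \<and> scale_ideal a J \<subseteq> K \<and> K \<subseteq> scale_ideal a (colon J m) \<longrightarrow>
        K = scale_ideal a J \<or> K = scale_ideal a (colon J m)) \<longleftrightarrow>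
      (\<forall>K'. is_ideal K' \<and> J \<subseteq> K' \<and> K' \<subseteq> colon J m \<longrightarrow> K' = J \<or> K' = colon J m)"
  proof (intro iffI allI impI)
    fix K' assume "\<forall>K. is_ideal K \<and> scale_ideal a J \<subseteq> K \<and> K \<subseteq> scale_ideal a (colon J m) \<longrightarrow>
        K = scale_ideal a J \<or> K = scale_ideal a (colon J m)"
      and "is_ideal K' \<and> J \<subseteq> K' \<and> K' \<subseteq> colon J m"
    then have "scale_ideal a K' = scale_ideal a J \<or> scale_ideal a K' = scale_ideal a (colon J m)"
      using interval[of "scale_ideal a K'"] by blast
    then show "K' = J \<or> K' = colon J m"
      by (simp add: scale_ideal_eq_iff[OF a])
  next
    fix K assume "\<forall>K'. is_ideal K' \<and> J \<subseteq> K' \<and> K' \<subseteq> colon J m \<longrightarrow> K' = J \<or> K' = colon J m"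
      and "is_ideal K \<and> scale_ideal a J \<subseteq> K \<and> K \<subseteq> scale_ideal a (colon J m)"
    then show "K = scale_ideal a J \<or> K = scale_ideal a (colon J m)"
      using interval[of K] by blast
  qed
  ultimately show ?thesis
    unfolding gorenstein_quot_def eq by (rule arg_cong2[where f = "(\<and>)"])
qed

lemma colon_scale_ideal_of_gorenstein:
  assumes a: "nonzerodivisor a" and I: "is_ideal I" "I \<subset> colon I m"
    and G: "gorenstein_quot m (scale_ideal a I)"
  shows "colon (scale_ideal a I) m = scale_ideal a (colon I m)"
proof -
  have "scale_ideal a I \<subset> scale_ideal a (colon I m)"
    using I(2) by (simp add: psubset_eq scale_ideal_subset_iff[OF a] scale_ideal_eq_iff[OF a])
  moreover have "is_ideal (scale_ideal a (colon I m))"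
    using I(1) by (intro is_ideal_scale_ideal is_ideal_colon)
  ultimately show ?thesis
    using G scale_ideal_colon_subset unfolding gorenstein_quot_def by blast
qed

lemma colon_scale_ideal_of_subset_principal:
  assumes xm: "x \<in> m" and x: "nonzerodivisor x" and a: "nonzerodivisor a"
    and sub: "I \<subseteq> principal x"
  shows "colon (scale_ideal a I) m = scale_ideal a (colon I m)"
proof
  show "colon (scale_ideal a I) m \<subseteq> scale_ideal a (colon I m)"
  proof
    fix r assume r: "r \<in> colon (scale_ideal a I) m"
    then obtain i where i: "r * x = a * i" "i \<in> I"
      using xm unfolding colon_def scale_ideal_def by blast
    then obtain t where t: "i = x * t"
      using sub unfolding principal_def by blast
    have "x * r = x * (a * t)"
      using i(1) t by (simp add: mult.commute mult.left_commute)
    then have rt: "r = a * t"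
      using nonzerodivisor_mult_cancel[OF x] by blast
    have "t \<in> colon I m"
      using r scale_ideal_mem_iff[OF a] unfolding colon_def rt by (simp add: mult.assoc)
    then show "r \<in> scale_ideal a (colon I m)"
      unfolding scale_ideal_def rt by blast
  qed
qed (rule scale_ideal_colon_subset)

theorem lemma2p1:
  fixes m I :: "'a::comm_ring_1 set" and x :: 'a
  assumes noeth: "noetherian_ring TYPE('a)"
    and loc: "local_ring_max m"
    and dim1: "ideal_dim ({0} :: 'a set) = 1"
    and CM: "cohen_macaulay m"
    and prim: "m_primary m I"
    and par: "parameter m x"
  shows "(\<forall>n\<ge>1. gorenstein_quot m (scale_ideal (x ^ n) I) \<longrightarrow>
            gorenstein_quot m I \<and>
            colon (scale_ideal (x ^ n) I) m = scale_ideal (x ^ n) (colon I m))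
       \<and> (I \<subseteq> principal x \<longrightarrow> gorenstein_quot m I \<longrightarrow>
            (\<forall>n\<ge>1. gorenstein_quot m (scale_ideal (x ^ n) I)))"
proof -
  have x: "nonzerodivisor x"
    using parameter_nonzerodivisor[OF loc dim1 CM par] .
  then have xn: "nonzerodivisor (x ^ n)" for n
    by (rule nonzerodivisor_power)
  have I: "is_ideal I"
    using prim by (simp add: m_primary_def)
  have socle: "I \<subset> colon I m"
    using m_primary_colon_psubset[OF noeth loc prim] .
  have "x \<in> m"
    using par by (simp add: parameter_def)
  have part_i: "gorenstein_quot m I \<and>
      colon (scale_ideal (x ^ n) I) m = scale_ideal (x ^ n) (colon I m)"
    if "gorenstein_quot m (scale_ideal (x ^ n) I)" for n
  proof -
    have eq: "colon (scale_ideal (x ^ n) I) m = scale_ideal (x ^ n) (colon I m)"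
      using colon_scale_ideal_of_gorenstein[OF xn I socle that] .
    with that show ?thesis
      using gorenstein_quot_scale_ideal_iff[OF xn eq] by simp
  qed
  have part_ii: "gorenstein_quot m (scale_ideal (x ^ n) I)"
    if "I \<subseteq> principal x" "gorenstein_quot m I" for n
    using gorenstein_quot_scale_ideal_iff[OF xn
        colon_scale_ideal_of_subset_principal[OF \<open>x \<in> m\<close> x xn that(1)]] that(2)
    by simp
  show ?thesis
    using part_i part_ii by blast
qed

end
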